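(* Let $\mathcal G$ be a shortest-path game in which $\mathrm{Val}^{\mathrm d}(v)\neq+\infty$ and $\overline{\mathrm{Val}}^{\mathrm m}(v)\neq+\infty$ for all vertices $v$, and let $\rho$ be a memoryless strategy of Min such that $\mathbb P^{\rho,\tau}_v(\Diamond T)=1$ for every vertex $v$ and every memoryless strategy $\tau$ of Max. Let $\widetilde{\mathcal G}$ be the game graph defined below. Then (i) for every vertex $v$, every finite path in $\widetilde{\mathcal G}$ from $v$ ending in $T$ (at its first visit to $T$) has total weight at most $\mathrm{Val}^{\mathrm m,\rho}(v)$; and (ii) every cycle in $\widetilde{\mathcal G}$ has non-positive total weight.
   Context: A shortest-path game is $\mathcal G=(V_{\mathrm{Max}},V_{\mathrm{Min}},T,E,w)$ with finite $V=V_{\mathrm{Max}}\uplus V_{\mathrm{Min}}\uplus T$, edges $E\subseteq (V\setminus T)\times V$ with every non-target vertex having a successor, and integer weights $w\colon E\to\mathbb Z$. Plays from $v$ are finite paths ending at their first visit to $T$ (total payoff $\mathrm{TP}$ = sum of weights) or infinite paths avoiding $T$ ($\mathrm{TP}=+\infty$). Strategies of Min (resp. Max) map finite paths ending in $V_{\mathrm{Min}}$ (resp. $V_{\mathrm{Max}}$) to distributions on successors of the last vertex; deterministic = always Dirac, memoryless = depends only on the last vertex. $\mathrm{Val}^{\mathrm d}(v)=\inf_\sigma\sup_\tau\mathrm{TP}(\text{unique play from } v \text{ conforming to } \sigma,\tau)$ over deterministic strategies. For memoryless $\rho,\tau$, $\mathbb P^{\rho,\tau}_v,\mathbb E^{\rho,\tau}_v$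 refer to the induced Markov chain; $\mathrm{Val}^{\mathrm m,\rho}(v)=\sup_\tau\mathbb E^{\rho,\tau}_v(\mathrm{TP})$ over memoryless $\tau$, $\overline{\mathrm{Val}}^{\mathrm m}(v)=\inf_\rho\mathrm{Val}^{\mathrm m,\rho}(v)$. For $v\in V_{\mathrm{Min}}$ let $\widetilde E(v)=\arg\min_{v'\in\mathrm{supp}(\rho(v))}\big[w(v,v')+\mathrm{Val}^{\mathrm m,\rho}(v')\big]$, and let $\widetilde{\mathcal G}$ be obtained from $\mathcal G$ by removing every edge $(v,v')$ with $v\in V_{\mathrm{Min}}$ and $v'\notin\widetilde E(v)$. *)

theory Defs
  imports "HOL-Probability.Probability"
begin

record 'v game =
  VMax :: "'v set"
  VMin :: "'v set"
  Tgt  :: "'v set"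
  Ed   :: "('v \<times> 'v) set"
  wt   :: "'v \<Rightarrow> 'v \<Rightarrow> int"

definition Vert :: "('v, 'a) game_scheme \<Rightarrow> 'v set" where
  "Vert G = VMax G \<union> VMin G \<union> Tgt G"

definition sp_game :: "('v, 'a) game_scheme \<Rightarrow> bool" where
  "sp_game G \<longleftrightarrow> finite (Vert G)
     \<and> VMax G \<inter> VMin G = {} \<and> VMax G \<inter> Tgt G = {} \<and> VMin G \<inter> Tgt G = {}
     \<and> Ed G \<subseteq> (Vert G - Tgt G) \<times> Vert G
     \<and> (\<forall>v \<in> Vert G - Tgt G. \<exists>v'. (v, v') \<in> Ed G)"

definition is_path :: "('v \<times> 'v) set \<Rightarrow> 'v list \<Rightarrow> bool" where
  "is_path E p \<longleftrightarrow> p \<noteq> [] \<and> (\<forall>i. Suc i < length p \<longrightarrow> (p ! i, p ! Suc i) \<in> E)"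

definition path_weight :: "('v, 'a) game_scheme \<Rightarrow> 'v list \<Rightarrow> int" where
  "path_weight G p = (\<Sum>i < length p - 1. wt G (p ! i) (p ! Suc i))"

definition is_play :: "('v, 'a) game_scheme \<Rightarrow> 'v \<Rightarrow> 'v list \<Rightarrow> bool" where
  "is_play G v p \<longleftrightarrow> is_path (Ed G) p \<and> hd p = v \<and> last p \<in> Tgt G
     \<and> (\<forall>i < length p - 1. p ! i \<notin> Tgt G)"

definition is_cycle :: "('v, 'a) game_scheme \<Rightarrow> 'v list \<Rightarrow> bool" where
  "is_cycle G p \<longleftrightarrow> is_path (Ed G) p \<and> length p \<ge> 2 \<and> hd p = last p"

definition det_strat :: "('v, 'a) game_scheme \<Rightarrow> 'v set \<Rightarrow> ('v list \<Rightarrow> 'v) \<Rightarrow> bool" where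
  "det_strat G S \<sigma> \<longleftrightarrow> (\<forall>p. p \<noteq> [] \<and> last p \<in> S \<longrightarrow> (last p, \<sigma> p) \<in> Ed G)"

fun dplay :: "('v, 'a) game_scheme \<Rightarrow> ('v list \<Rightarrow> 'v) \<Rightarrow> ('v list \<Rightarrow> 'v) \<Rightarrow> 'v \<Rightarrow> nat \<Rightarrow> 'v list" where
  "dplay G \<sigma> \<tau> v 0 = [v]"
| "dplay G \<sigma> \<tau> v (Suc n) = (let p = dplay G \<sigma> \<tau> v n; u = last p in
     if u \<in> Tgt G then p else p @ [if u \<in> VMin G then \<sigma> p else \<tau> p])"

definition TP_det :: "('v, 'a) game_scheme \<Rightarrow> ('v list \<Rightarrow> 'v) \<Rightarrow> ('v list \<Rightarrow> 'v) \<Rightarrow> 'v \<Rightarrow> ereal" where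
  "TP_det G \<sigma> \<tau> v = (if \<exists>n. last (dplay G \<sigma> \<tau> v n) \<in> Tgt G
      then ereal (real_of_int (path_weight G (dplay G \<sigma> \<tau> v (LEAST n. last (dplay G \<sigma> \<tau> v n) \<in> Tgt G))))
      else \<infinity>)"

definition Val_d :: "('v, 'a) game_scheme \<Rightarrow> 'v \<Rightarrow> ereal" where
  "Val_d G v = (INF \<sigma> \<in> {\<sigma>. det_strat G (VMin G) \<sigma>}. SUP \<tau> \<in> {\<tau>. det_strat G (VMax G) \<tau>}. TP_det G \<sigma> \<tau> v)"

definition ml_strat :: "('v, 'a) game_scheme \<Rightarrow> 'v set \<Rightarrow> ('v \<Rightarrow> 'v pmf) \<Rightarrow> bool" where
  "ml_strat G S \<rho> \<longleftrightarrow> (\<forall>u \<in> S. set_pmf (\<rho> u) \<subseteq> {u'. (u, u') \<in> Ed G})"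

definition trans_pmf :: "('v, 'a) game_scheme \<Rightarrow> ('v \<Rightarrow> 'v pmf) \<Rightarrow> ('v \<Rightarrow> 'v pmf) \<Rightarrow> 'v \<Rightarrow> 'v pmf" where
  "trans_pmf G \<rho> \<tau> u = (if u \<in> VMin G then \<rho> u else if u \<in> VMax G then \<tau> u else return_pmf u)"

text \<open>Probability of the cylinder set of a finite path (starting from its first vertex).\<close>
definition path_prob :: "('v, 'a) game_scheme \<Rightarrow> ('v \<Rightarrow> 'v pmf) \<Rightarrow> ('v \<Rightarrow> 'v pmf) \<Rightarrow> 'v list \<Rightarrow> real" where
  "path_prob G \<rho> \<tau> p = (\<Prod>i < length p - 1. pmf (trans_pmf G \<rho> \<tau> (p ! i)) (p ! Suc i))"

text \<open>P^{rho,tau}_v(eventually T): sum over the (disjoint) cylinders of finite plays.\<close>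
definition reach_prob :: "('v, 'a) game_scheme \<Rightarrow> ('v \<Rightarrow> 'v pmf) \<Rightarrow> ('v \<Rightarrow> 'v pmf) \<Rightarrow> 'v \<Rightarrow> real" where
  "reach_prob G \<rho> \<tau> v = infsum (path_prob G \<rho> \<tau>) {p. is_play G v p}"

text \<open>E^{rho,tau}_v(TP): +infinity if T is missed with positive probability (TP = +infinity there),
  otherwise the (absolutely convergent) sum over finite plays.\<close>
definition exp_TP :: "('v, 'a) game_scheme \<Rightarrow> ('v \<Rightarrow> 'v pmf) \<Rightarrow> ('v \<Rightarrow> 'v pmf) \<Rightarrow> 'v \<Rightarrow> ereal" where
  "exp_TP G \<rho> \<tau> v = (if reach_prob G \<rho> \<tau> v = 1
      then ereal (infsum (\<lambda>p. path_prob G \<rho> \<tau> p * real_of_int (path_weight G p)) {p. is_play G v p})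
      else \<infinity>)"

definition Val_m_rho :: "('v, 'a) game_scheme \<Rightarrow> ('v \<Rightarrow> 'v pmf) \<Rightarrow> 'v \<Rightarrow> ereal" where
  "Val_m_rho G \<rho> v = (SUP \<tau> \<in> {\<tau>. ml_strat G (VMax G) \<tau>}. exp_TP G \<rho> \<tau> v)"

definition Val_m_bar :: "('v, 'a) game_scheme \<Rightarrow> 'v \<Rightarrow> ereal" where
  "Val_m_bar G v = (INF \<rho> \<in> {\<rho>. ml_strat G (VMin G) \<rho>}. Val_m_rho G \<rho> v)"

definition E_tilde :: "('v, 'a) game_scheme \<Rightarrow> ('v \<Rightarrow> 'v pmf) \<Rightarrow> 'v \<Rightarrow> 'v set" where
  "E_tilde G \<rho> u = {u' \<in> set_pmf (\<rho> u). \<forall>u'' \<in> set_pmf (\<rho> u).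
      ereal (real_of_int (wt G u u')) + Val_m_rho G \<rho> u' \<le> ereal (real_of_int (wt G u u'')) + Val_m_rho G \<rho> u''}"

definition tilde_game :: "('v, 'a) game_scheme \<Rightarrow> ('v \<Rightarrow> 'v pmf) \<Rightarrow> ('v, 'a) game_scheme" where
  "tilde_game G \<rho> = G\<lparr>Ed := {(u, u') \<in> Ed G. u \<in> VMin G \<longrightarrow> u' \<in> E_tilde G \<rho> u}\<rparr>"

end

theory Submission
  imports Defs
begin

(* Against every memoryless reply tau of Max the play is an absorbing
   Markov chain on the finite vertex set, so the probability of not yet having reached T decays
   geometrically, the expected number of steps is finite, and the expected payoff g_tau is a finite
   solution of the Bellman equation. Absorption also yields a maximum principle: a function that is
   nonpositive on T and below its one-step average elsewhere is nonpositive, because the set where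
   it attains a positive maximum would be closed under the chain and avoid T.

   Among the finitely many pure memoryless replies take one maximizing the sum of g_tau over all
   vertices. No switch at a Max vertex can improve it, so g = g_tau satisfies
   w(x,y) + g(y) <= g(x) on every edge leaving a Max vertex; by the maximum principle g dominates
   the payoff of every memoryless reply, i.e. g = Val^{m,rho}. On an edge (u,u') of the restricted
   graph the same inequality holds: at Max vertices by the above, at Min vertices because u'
   minimizes w(u,.) + g over the support of rho(u) and the rho(u)-average of that function is g(u).
   Telescoping along paths, with g = 0 on T, gives both claims. *)

section \<open>Plays\<close>

lemma is_path_Cons:
  assumes "q \<noteq> []"
  shows "is_path E (a # q) \<longleftrightarrow> (a, hd q) \<in> E \<and> is_path E q"
proof -
  have split_nat: "\<And>P. (\<forall>i. P i) \<longleftrightarrow> P 0 \<and> (\<forall>i. P (Suc i))"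
    by (metis not0_implies_Suc)
  show ?thesis
    using assms unfolding is_path_def by (subst split_nat) (simp add: hd_conv_nth)
qed

lemma is_play_iff:
  "is_play G v p \<longleftrightarrow> is_path (Ed G) p \<and> hd p = v \<and> last p \<in> Tgt G \<and> set (butlast p) \<inter> Tgt G = {}"
proof -
  have "set (butlast p) = {p ! i | i. i < length p - 1}"
    by (fastforce simp: in_set_conv_nth nth_butlast)
  then show ?thesis unfolding is_play_def by auto
qed

lemma is_play_Cons:
  assumes "q \<noteq> []"
  shows "is_play G v (u # q) \<longleftrightarrow> u = v \<and> v \<notin> Tgt G \<and> (v, hd q) \<in> Ed G \<and> is_play G (hd q) q"
  using assms by (auto simp: is_play_iff is_path_Cons)

lemma plays_from_target: "v \<in> Tgt G \<Longrightarrow> {p. is_play G v p} = {[v]}"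
  by (auto simp: is_play_iff is_path_def neq_Nil_conv)

lemma plays_from_nontarget:
  assumes "v \<notin> Tgt G"
  shows "{p. is_play G v p} = (\<Union>z \<in> Ed G `` {v}. Cons v ` {q. is_play G z q})"
proof (intro set_eqI iffI)
  fix p assume "p \<in> {p. is_play G v p}"
  then have play: "is_play G v p" by simp
  then obtain q where q: "p = v # q" by (cases p) (auto simp: is_play_iff is_path_def)
  with play assms have "q \<noteq> []" by (auto simp: is_play_iff)
  with play q show "p \<in> (\<Union>z \<in> Ed G `` {v}. Cons v ` {q. is_play G z q})"
    by (auto simp: is_play_Cons)
next
  fix p assume "p \<in> (\<Union>z \<in> Ed G `` {v}. Cons v ` {q. is_play G z q})"
  then obtain z q where "(v, z) \<in> Ed G" "is_play G z q" "p = v # q" by auto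
  moreover from this have "q \<noteq> []" "hd q = z" by (auto simp: is_play_iff is_path_def)
  ultimately show "p \<in> {p. is_play G v p}" using assms by (simp add: is_play_Cons)
qed

lemma path_weight_Cons:
  "q \<noteq> [] \<Longrightarrow> path_weight G (v # q) = wt G v (hd q) + path_weight G q"
  unfolding path_weight_def by (cases q) (simp_all add: sum.lessThan_Suc_shift del: sum.lessThan_Suc)

lemma path_prob_Cons:
  "q \<noteq> [] \<Longrightarrow> path_prob G \<rho> \<tau> (v # q) = pmf (trans_pmf G \<rho> \<tau> v) (hd q) * path_prob G \<rho> \<tau> q"
  unfolding path_prob_def by (cases q) (simp_all add: prod.lessThan_Suc_shift del: prod.lessThan_Suc)

lemma path_weight_le_potential_drop:
  fixes g :: "'v \<Rightarrow> real"
  assumes drop: "\<And>a b. (a, b) \<in> E \<Longrightarrow> real_of_int (wt H a b) + g b \<le> g a"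
  shows "is_path E p \<Longrightarrow> real_of_int (path_weight H p) \<le> g (hd p) - g (last p)"
proof (induction p)
  case (Cons a q)
  show ?case
  proof (cases "q = []")
    case False
    with Cons.prems have "(a, hd q) \<in> E" "is_path E q" by (simp_all add: is_path_Cons)
    with Cons.IH drop[of a "hd q"] False show ?thesis by (simp add: path_weight_Cons)
  qed (simp add: path_weight_def)
qed (simp add: is_path_def)

lemma path_prob_nonneg: "0 \<le> path_prob G \<rho> \<tau> p"
  by (simp add: path_prob_def prod_nonneg)

lemma path_prob_steps_Cons:
  assumes "q \<noteq> []"
  shows "path_prob G \<rho> \<tau> (v # q) * real (length q)
    = pmf (trans_pmf G \<rho> \<tau> v) (hd q) * (path_prob G \<rho> \<tau> q + path_prob G \<rho> \<tau> q * real (length q - 1))"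
  using assms by (simp add: path_prob_Cons algebra_simps of_nat_diff Suc_leI)

lemma path_weight_abs_le:
  assumes bound: "\<And>a b. (a, b) \<in> E \<Longrightarrow> \<bar>wt H a b\<bar> \<le> W" and p: "is_path E p"
  shows "\<bar>path_weight H p\<bar> \<le> int (length p - 1) * W"
proof -
  have "\<bar>path_weight H p\<bar> \<le> (\<Sum>i<length p - 1. \<bar>wt H (p ! i) (p ! Suc i)\<bar>)"
    unfolding path_weight_def by (rule sum_abs)
  also have "\<dots> \<le> int (length p - 1) * W"
    using sum_bounded_above[of "{..<length p - 1}" "\<lambda>i. \<bar>wt H (p ! i) (p ! Suc i)\<bar>" W] bound p
    by (auto simp: is_path_def)
  finally show ?thesis .
qed

lemma has_sum_plays_first_step:
  fixes f :: "'v list \<Rightarrow> real"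
  assumes y: "y \<notin> Tgt G" and fin: "finite (Ed G `` {y})"
    and tails: "\<And>z. (y, z) \<in> Ed G \<Longrightarrow> ((\<lambda>q. f (y # q)) has_sum s z) {q. is_play G z q}"
  shows "(f has_sum (\<Sum>z \<in> Ed G `` {y}. s z)) {p. is_play G y p}"
proof -
  have "(f has_sum (\<Sum>z \<in> Ed G `` {y}. s z)) (\<Union>z \<in> Ed G `` {y}. Cons y ` {q. is_play G z q})"
  proof (rule sum_has_sum[OF fin])
    fix z assume "z \<in> Ed G `` {y}"
    with tails show "(f has_sum s z) (Cons y ` {q. is_play G z q})"
      by (simp add: has_sum_reindex inj_on_def comp_def)
  next
    fix z z' :: 'v assume "z \<noteq> z'"
    then show "Cons y ` {q. is_play G z q} \<inter> Cons y ` {q. is_play G z' q} = {}"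
      unfolding is_play_def by blast
  qed
  with plays_from_nontarget[OF y] show ?thesis by simp
qed

definition expected_payoff ::
    "('v, 'a) game_scheme \<Rightarrow> ('v \<Rightarrow> 'v pmf) \<Rightarrow> ('v \<Rightarrow> 'v pmf) \<Rightarrow> 'v \<Rightarrow> real" where
  "expected_payoff G \<rho> \<tau> v =
     infsum (\<lambda>p. path_prob G \<rho> \<tau> p * real_of_int (path_weight G p)) {p. is_play G v p}"

lemma expected_payoff_target: "y \<in> Tgt G \<Longrightarrow> expected_payoff G \<rho> \<tau> y = 0"
  by (simp add: expected_payoff_def plays_from_target path_weight_def)

section \<open>The Markov chain of two memoryless strategies\<close>

locale ml_chain =
  fixes G :: "('v, 'a) game_scheme" and \<rho> \<tau> :: "'v \<Rightarrow> 'v pmf"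
  assumes sp_game: "sp_game G"
    and min_strategy: "ml_strat G (VMin G) \<rho>"
    and max_strategy: "ml_strat G (VMax G) \<tau>"
begin

abbreviation step :: "'v \<Rightarrow> 'v \<Rightarrow> real" where
  "step x y \<equiv> pmf (trans_pmf G \<rho> \<tau> x) y"

lemma finite_Vert: "finite (Vert G)"
  using sp_game by (simp add: sp_game_def)

lemma edge_in_Vert: "(x, y) \<in> Ed G \<Longrightarrow> x \<in> Vert G - Tgt G \<and> y \<in> Vert G"
  using sp_game by (auto simp: sp_game_def)

lemma succs_subset_Vert: "Ed G `` {x} \<subseteq> Vert G"
  using edge_in_Vert by blast

lemma finite_succs: "finite (Ed G `` {x})"
  using succs_subset_Vert finite_Vert by (rule finite_subset)

lemma set_trans_pmf_subset_succs:
  assumes "x \<in> Vert G - Tgt G"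
  shows "set_pmf (trans_pmf G \<rho> \<tau> x) \<subseteq> Ed G `` {x}"
proof -
  have "x \<in> VMin G \<union> VMax G" using assms by (auto simp: Vert_def)
  with min_strategy max_strategy show ?thesis by (auto simp: trans_pmf_def ml_strat_def)
qed

lemma step_nonzero_edge: "x \<in> Vert G - Tgt G \<Longrightarrow> step x y \<noteq> 0 \<Longrightarrow> (x, y) \<in> Ed G"
  using set_trans_pmf_subset_succs by (blast dest: set_pmf_iff[THEN iffD2])

lemma sum_succs_eq_sum_Vert:
  assumes "x \<in> Vert G - Tgt G"
  shows "(\<Sum>y \<in> Ed G `` {x}. step x y * f y) = (\<Sum>y \<in> Vert G. step x y * f y)"
proof (rule sum.mono_neutral_left[OF finite_Vert succs_subset_Vert])
  show "\<forall>y \<in> Vert G - Ed G `` {x}. step x y * f y = 0"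
    using step_nonzero_edge[OF assms] by fastforce
qed

lemma step_sum_eq_1: "x \<in> Vert G - Tgt G \<Longrightarrow> (\<Sum>y \<in> Vert G. step x y) = 1"
  using set_trans_pmf_subset_succs succs_subset_Vert
  by (intro sum_pmf_eq_1 finite_Vert) blast

lemma support_attains_upper_bound:
  assumes x: "x \<in> Vert G - Tgt G" and bound: "\<And>z. z \<in> Vert G \<Longrightarrow> f z \<le> M"
    and avg: "M \<le> (\<Sum>z \<in> Vert G. step x z * f z)" and y: "step x y \<noteq> 0"
  shows "f y = M"
proof -
  have nonneg: "\<And>z. z \<in> Vert G \<Longrightarrow> 0 \<le> step x z * (M - f z)"
    using bound by simp
  have "(\<Sum>z \<in> Vert G. step x z * (M - f z)) = M * (\<Sum>z \<in> Vert G. step x z) - (\<Sum>z \<in> Vert G. step x z * f z)"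
    by (simp add: algebra_simps sum_subtractf sum_distrib_left)
  also have "\<dots> \<le> 0"
    using avg step_sum_eq_1[OF x] by simp
  finally have "(\<Sum>z \<in> Vert G. step x z * (M - f z)) = 0"
    using sum_nonneg[of "Vert G" "\<lambda>z. step x z * (M - f z)", OF nonneg] by linarith
  moreover have "y \<in> Vert G" using edge_in_Vert step_nonzero_edge[OF x y] by blast
  ultimately have "step x y * (M - f y) = 0"
    using sum_nonneg_eq_0_iff[OF finite_Vert, of "\<lambda>z. step x z * (M - f z)"] nonneg by blast
  with y show ?thesis by simp
qed

lemma step_average_le:
  assumes x: "x \<in> Vert G - Tgt G" and le: "\<And>z. step x z \<noteq> 0 \<Longrightarrow> F z \<le> c"
  shows "(\<Sum>z \<in> Vert G. step x z * F z) \<le> c"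
proof -
  have "(\<Sum>z \<in> Vert G. step x z * F z) \<le> (\<Sum>z \<in> Vert G. step x z * c)"
    using le by (intro sum_mono) (metis mult_left_mono mult_not_zero order_refl pmf_nonneg)
  also have "\<dots> = c" using step_sum_eq_1[OF x] by (simp flip: sum_distrib_right)
  finally show ?thesis .
qed

lemma step_average_ge:
  assumes x: "x \<in> Vert G - Tgt G" and ge: "\<And>z. step x z \<noteq> 0 \<Longrightarrow> c \<le> F z"
  shows "c \<le> (\<Sum>z \<in> Vert G. step x z * F z)"
  using step_average_le[OF x, of "\<lambda>z. - F z" "- c"] ge by (simp add: sum_negf)

lemma path_prob_eq_0_from_closed_set:
  assumes avoid: "S \<inter> Tgt G = {}" and closed: "\<And>x z. x \<in> S \<Longrightarrow> step x z \<noteq> 0 \<Longrightarrow> z \<in> S"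
  shows "is_play G y p \<Longrightarrow> y \<in> S \<Longrightarrow> path_prob G \<rho> \<tau> p = 0"
proof (induction p arbitrary: y)
  case (Cons u q)
  show ?case
  proof (cases "q = []")
    case True
    with Cons.prems avoid show ?thesis by (auto simp: is_play_iff)
  next
    case False
    with Cons.prems have "u = y" "is_play G (hd q) q" by (simp_all add: is_play_Cons)
    with Cons.IH[of "hd q"] Cons.prems(2) closed[of y "hd q"] False show ?thesis
      by (auto simp: path_prob_Cons)
  qed
qed (simp add: is_play_iff is_path_def)

lemma sum_plays_first_step:
  assumes v: "v \<notin> Tgt G" and F: "finite F" "F \<subseteq> {p. is_play G v p}"
  shows "(\<Sum>p\<in>F. f p) = (\<Sum>z \<in> Ed G `` {v}. \<Sum>q \<in> {q. v # q \<in> F \<and> is_play G z q}. f (v # q))"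
proof -
  define Q where "Q z = {q. v # q \<in> F \<and> is_play G z q}" for z
  have F_eq: "F = (\<Union>z \<in> Ed G `` {v}. Cons v ` Q z)"
  proof (intro equalityI subsetI)
    fix p assume "p \<in> F"
    with F(2) plays_from_nontarget[OF v] obtain z q
      where "z \<in> Ed G `` {v}" "is_play G z q" "p = v # q" by blast
    with \<open>p \<in> F\<close> show "p \<in> (\<Union>z \<in> Ed G `` {v}. Cons v ` Q z)"
      unfolding Q_def by blast
  qed (auto simp: Q_def)
  have "\<forall>z \<in> Ed G `` {v}. finite (Cons v ` Q z)"
    using F(1) by (metis (no_types, lifting) F_eq UN_upper finite_subset)
  moreover have "\<forall>z \<in> Ed G `` {v}. \<forall>z' \<in> Ed G `` {v}. z \<noteq> z' \<longrightarrow> Cons v ` Q z \<inter> Cons v ` Q z' = {}"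
    unfolding Q_def is_play_def by blast
  ultimately have "(\<Sum>p\<in>F. f p) = (\<Sum>z \<in> Ed G `` {v}. \<Sum>p \<in> Cons v ` Q z. f p)"
    by (subst F_eq) (rule sum.UNION_disjoint[OF finite_succs])
  then show ?thesis unfolding Q_def by (simp add: sum.reindex)
qed

lemma sum_plays_steps_first_step:
  assumes y: "y \<notin> Tgt G" and F: "finite F" "F \<subseteq> {p. is_play G y p}"
  shows "(\<Sum>p\<in>F. path_prob G \<rho> \<tau> p * real (length p - 1)) = (\<Sum>z \<in> Ed G `` {y}. step y z *
    ((\<Sum>q | y # q \<in> F \<and> is_play G z q. path_prob G \<rho> \<tau> q)
      + (\<Sum>q | y # q \<in> F \<and> is_play G z q. path_prob G \<rho> \<tau> q * real (length q - 1))))"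
proof -
  have "(\<Sum>p\<in>F. path_prob G \<rho> \<tau> p * real (length p - 1)) = (\<Sum>z \<in> Ed G `` {y}.
      \<Sum>q | y # q \<in> F \<and> is_play G z q. path_prob G \<rho> \<tau> (y # q) * real (length (y # q) - 1))"
    by (rule sum_plays_first_step[OF y F])
  also have "\<dots> = (\<Sum>z \<in> Ed G `` {y}. \<Sum>q | y # q \<in> F \<and> is_play G z q.
      step y z * (path_prob G \<rho> \<tau> q + path_prob G \<rho> \<tau> q * real (length q - 1)))"
  proof (intro sum.cong refl)
    fix z q assume "q \<in> {q. y # q \<in> F \<and> is_play G z q}"
    then have "q \<noteq> []" "hd q = z" by (auto simp: is_play_def is_path_def)
    then show "path_prob G \<rho> \<tau> (y # q) * real (length (y # q) - 1)
        = step y z * (path_prob G \<rho> \<tau> q + path_prob G \<rho> \<tau> q * real (length q - 1))"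
      by (simp add: path_prob_steps_Cons)
  qed
  finally show ?thesis by (simp add: sum.distrib sum_distrib_left distrib_left)
qed

lemma finite_Ed: "finite (Ed G)"
proof (rule finite_subset)
  show "Ed G \<subseteq> Vert G \<times> Vert G" using edge_in_Vert by auto
qed (simp add: finite_Vert)

(* survival k y is the probability of not having reached the targets within k steps from y. *)
primrec survival :: "nat \<Rightarrow> 'v \<Rightarrow> real" where
  "survival 0 y = (if y \<in> Vert G - Tgt G then 1 else 0)"
| "survival (Suc k) y = (if y \<in> Vert G - Tgt G then (\<Sum>z \<in> Vert G. step y z * survival k z) else 0)"

lemma survival_nonneg_le_1: "0 \<le> survival k y \<and> survival k y \<le> 1"
proof (induction k arbitrary: y)
  case (Suc k)
  show ?case
  proof (cases "y \<in> Vert G - Tgt G")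
    case True
    have "(\<Sum>z \<in> Vert G. step y z * survival k z) \<le> (\<Sum>z \<in> Vert G. step y z)"
      using Suc by (intro sum_mono) (simp add: mult_left_le)
    moreover have "0 \<le> (\<Sum>z \<in> Vert G. step y z * survival k z)"
      using Suc by (intro sum_nonneg) simp
    ultimately show ?thesis using True step_sum_eq_1[OF True] by simp
  qed auto
qed simp

lemma survival_eq_0: "y \<notin> Vert G - Tgt G \<Longrightarrow> survival k y = 0"
  by (cases k) auto

lemma survival_Suc_le: "survival (Suc k) y \<le> survival k y"
proof (induction k arbitrary: y)
  case 0
  show ?case
  proof (cases "y \<in> Vert G - Tgt G")
    case True
    then show ?thesis using survival_nonneg_le_1[of "Suc 0" y] by (simp del: survival.simps(2))
  next
    case False
    then have "survival (Suc 0) y = 0" "survival 0 y = 0" by (rule survival_eq_0)+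
    then show ?thesis by simp
  qed
next
  case (Suc k)
  have "(\<Sum>z \<in> Vert G. step y z * survival (Suc k) z) \<le> (\<Sum>z \<in> Vert G. step y z * survival k z)"
    by (intro sum_mono mult_left_mono Suc.IH) simp
  then show ?case by (simp only: survival.simps(2)[of "Suc k" y] survival.simps(2)[of k y]) simp
qed

lemma survival_add_le:
  assumes "\<And>z. survival a z \<le> c"
  shows "survival (b + a) y \<le> c * survival b y"
proof (induction b arbitrary: y)
  case 0
  show ?case using assms[of y] survival_eq_0 by (cases "y \<in> Vert G - Tgt G") auto
next
  case (Suc b)
  then have "(\<Sum>z \<in> Vert G. step y z * survival (b + a) z) \<le> (\<Sum>z \<in> Vert G. step y z * (c * survival b z))"
    by (intro sum_mono mult_left_mono) auto
  then show ?case by (simp add: sum_distrib_left algebra_simps)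
qed

lemma survival_sum_Suc:
  "y \<in> Vert G - Tgt G \<Longrightarrow>
    (\<Sum>k<Suc n. survival k y) = 1 + (\<Sum>z \<in> Vert G. step y z * (\<Sum>k<n. survival k z))"
  by (simp add: sum.lessThan_Suc_shift sum_distrib_left sum.swap[of _ "Vert G"] del: sum.lessThan_Suc)

lemma path_weight_bounded:
  obtains W :: real where "\<And>p. is_path (Ed G) p \<Longrightarrow> \<bar>path_weight G p\<bar> \<le> W * real (length p - 1)"
proof
  define W where "W = (\<Sum>e \<in> Ed G. \<bar>wt G (fst e) (snd e)\<bar>)"
  have "\<bar>wt G a b\<bar> \<le> W" if "(a, b) \<in> Ed G" for a b
    unfolding W_def using member_le_sum[OF that, of "\<lambda>e. \<bar>wt G (fst e) (snd e)\<bar>"] finite_Ed by simp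
  then have "\<bar>path_weight G p\<bar> \<le> int (length p - 1) * W" if "is_path (Ed G) p" for p
    using path_weight_abs_le that by blast
  then show "\<bar>path_weight G p\<bar> \<le> real_of_int W * real (length p - 1)" if "is_path (Ed G) p" for p
    using that by (metis mult.commute of_int_le_iff of_int_mult of_int_of_nat_eq)
qed

end

section \<open>Absorbing chains\<close>

locale absorbing_chain = ml_chain G \<rho> \<tau>
  for G :: "('v, 'a) game_scheme" and \<rho> \<tau> :: "'v \<Rightarrow> 'v pmf" +
  assumes almost_sure_reach: "v \<in> Vert G \<Longrightarrow> reach_prob G \<rho> \<tau> v = 1"
begin

lemma plays_prob_has_sum_1: "v \<in> Vert G \<Longrightarrow> (path_prob G \<rho> \<tau> has_sum 1) {p. is_play G v p}"
  using almost_sure_reach[of v] infsum_not_exists[of "path_prob G \<rho> \<tau>"]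
  unfolding reach_prob_def by (metis has_sum_infsum zero_neq_one)

lemma sum_plays_prob_le_1:
  assumes "v \<in> Vert G" "finite Q" "Q \<subseteq> {p. is_play G v p}"
  shows "(\<Sum>p\<in>Q. path_prob G \<rho> \<tau> p) \<le> 1"
  using finite_sum_le_has_sum[OF plays_prob_has_sum_1 assms(2,3)] assms(1) path_prob_nonneg by blast

lemma closed_set_avoiding_targets_empty:
  assumes "S \<subseteq> Vert G" and avoid: "S \<inter> Tgt G = {}"
    and closed: "\<And>x z. x \<in> S \<Longrightarrow> step x z \<noteq> 0 \<Longrightarrow> z \<in> S"
  shows "S = {}"
proof (rule ccontr)
  assume "S \<noteq> {}"
  then obtain y where y: "y \<in> S" by blast
  have null: "path_prob G \<rho> \<tau> p = 0" if "is_play G y p" for p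
    using path_prob_eq_0_from_closed_set[OF avoid closed that y] .
  have "reach_prob G \<rho> \<tau> y = 0"
    unfolding reach_prob_def by (intro infsum_0) (simp add: null)
  with y assms(1) almost_sure_reach show False by force
qed

lemma max_principle:
  fixes h :: "'v \<Rightarrow> real"
  assumes target: "\<And>u. u \<in> Tgt G \<Longrightarrow> h u \<le> 0"
    and subharmonic: "\<And>u. u \<in> Vert G - Tgt G \<Longrightarrow> h u \<le> (\<Sum>z \<in> Vert G. step u z * h z)"
    and v: "v \<in> Vert G"
  shows "h v \<le> 0"
proof (rule ccontr)
  assume "\<not> h v \<le> 0"
  define M where "M = Max (h ` Vert G)"
  have le_M: "\<And>u. u \<in> Vert G \<Longrightarrow> h u \<le> M"
    unfolding M_def using finite_Vert by simp
  have "M \<in> h ` Vert G"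
    unfolding M_def using finite_Vert v by (intro Max_in) auto
  then obtain x where x: "x \<in> Vert G" "h x = M" by blast
  have "M > 0" using le_M[OF v] \<open>\<not> h v \<le> 0\<close> by simp
  define S where "S = {u \<in> Vert G. h u = M}"
  have "S = {}"
  proof (rule closed_set_avoiding_targets_empty)
    show "S \<inter> Tgt G = {}" using target \<open>M > 0\<close> unfolding S_def by force
    fix u z assume "u \<in> S" "step u z \<noteq> 0"
    with \<open>S \<inter> Tgt G = {}\<close> have u: "u \<in> Vert G - Tgt G" "h u = M" unfolding S_def by auto
    have "h z = M"
      using support_attains_upper_bound[OF u(1) le_M] subharmonic[OF u(1)] u(2) \<open>step u z \<noteq> 0\<close>
      by simp
    moreover have "z \<in> Vert G" using edge_in_Vert step_nonzero_edge[OF u(1) \<open>step u z \<noteq> 0\<close>] by blast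
    ultimately show "z \<in> S" unfolding S_def by blast
  qed (simp add: S_def)
  with x show False unfolding S_def by blast
qed

definition sure_survivors :: "nat \<Rightarrow> 'v set" where
  "sure_survivors k = {y \<in> Vert G. survival k y = 1}"

lemma sure_survivors_Suc_subset: "sure_survivors (Suc k) \<subseteq> sure_survivors k"
proof
  fix y assume "y \<in> sure_survivors (Suc k)"
  with survival_Suc_le[of k y] survival_nonneg_le_1[of k y] show "y \<in> sure_survivors k"
    by (auto simp: sure_survivors_def simp del: survival.simps(2))
qed

lemma sure_survivors_stable_empty:
  assumes stable: "sure_survivors (Suc k) = sure_survivors k"
  shows "sure_survivors k = {}"
proof (rule closed_set_avoiding_targets_empty)
  show "sure_survivors k \<inter> Tgt G = {}"
    unfolding sure_survivors_def using survival_eq_0 by fastforce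
  fix x z assume x: "x \<in> sure_survivors k" and "step x z \<noteq> 0"
  then have x': "x \<in> Vert G - Tgt G" using \<open>sure_survivors k \<inter> Tgt G = {}\<close>
    unfolding sure_survivors_def by blast
  from x stable have "survival (Suc k) x = 1" unfolding sure_survivors_def by blast
  with x' have "1 \<le> (\<Sum>z \<in> Vert G. step x z * survival k z)" by simp
  then have "survival k z = 1"
    using support_attains_upper_bound[OF x'] survival_nonneg_le_1 \<open>step x z \<noteq> 0\<close> by blast
  moreover have "z \<in> Vert G" using edge_in_Vert step_nonzero_edge[OF x' \<open>step x z \<noteq> 0\<close>] by blast
  ultimately show "z \<in> sure_survivors k" unfolding sure_survivors_def by blast
qed (simp add: sure_survivors_def)

lemma card_sure_survivors: "sure_survivors k = {} \<or> card (sure_survivors k) + k \<le> card (Vert G)"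
proof (induction k)
  case 0
  have "card (sure_survivors 0) \<le> card (Vert G)"
    by (rule card_mono[OF finite_Vert]) (auto simp: sure_survivors_def)
  then show ?case by simp
next
  case (Suc k)
  show ?case
  proof (cases "sure_survivors (Suc k) = {}")
    case False
    then have "sure_survivors (Suc k) \<subset> sure_survivors k"
      using sure_survivors_Suc_subset sure_survivors_stable_empty by blast
    moreover have "finite (sure_survivors k)"
      using finite_Vert unfolding sure_survivors_def by simp
    ultimately have "card (sure_survivors (Suc k)) < card (sure_survivors k)"
      by (rule psubset_card_mono[rotated])
    with Suc False show ?thesis using sure_survivors_Suc_subset by force
  qed simp
qed

lemma survival_card_Vert_lt_1: "survival (card (Vert G)) y < 1"
proof -
  have "sure_survivors (card (Vert G)) = {}"
    using card_sure_survivors[of "card (Vert G)"] finite_Vert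
    by (auto simp: sure_survivors_def)
  then show ?thesis
    using survival_nonneg_le_1[of "card (Vert G)" y] survival_eq_0[of y "card (Vert G)"]
    unfolding sure_survivors_def by fastforce
qed

lemma survival_sum_bounded:
  obtains B where "\<And>n y. (\<Sum>k<n. survival k y) \<le> B"
proof -
  let ?N = "card (Vert G)"
  define c where "c = Max (insert 0 (survival ?N ` Vert G))"
  have c_mem: "c \<in> insert 0 (survival ?N ` Vert G)"
    unfolding c_def using finite_Vert by (intro Max_in) auto
  have c: "0 \<le> c" "c < 1"
    using c_mem survival_card_Vert_lt_1 unfolding c_def by (auto simp: finite_Vert)
  have le_c: "survival ?N z \<le> c" for z
    using survival_eq_0[of z ?N] c(1) unfolding c_def by (cases "z \<in> Vert G") (auto simp: finite_Vert)
  have "(\<Sum>k<n. survival k y) \<le> ?N / (1 - c)" for n y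
  proof -
    \<comment> \<open>Shifting the sum by ?N steps gives S \<le> ?N + c * S for the partial sum S.\<close>
    have split: "(\<Sum>k<n + ?N. survival k y) = (\<Sum>k<?N. survival k y) + (\<Sum>k<n. survival (k + ?N) y)"
      by (induction n) simp_all
    have "(\<Sum>k<n. survival k y) \<le> (\<Sum>k<n + ?N. survival k y)"
      using survival_nonneg_le_1 by (intro sum_mono2) auto
    also have "\<dots> \<le> (\<Sum>k<?N. 1) + (\<Sum>k<n. c * survival k y)"
      unfolding split using survival_nonneg_le_1 survival_add_le[OF le_c]
      by (intro add_mono sum_mono) auto
    also have "\<dots> = ?N + c * (\<Sum>k<n. survival k y)"
      by (simp add: sum_distrib_left)
    finally show ?thesis using c by (simp add: le_divide_eq algebra_simps)
  qed
  then show ?thesis by (rule that)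
qed

lemma sum_plays_steps_le_survival_sum:
  assumes "y \<in> Vert G" "finite F" "F \<subseteq> {p. is_play G y p}" "\<forall>p\<in>F. length p \<le> Suc n"
  shows "(\<Sum>p\<in>F. path_prob G \<rho> \<tau> p * real (length p - 1)) \<le> (\<Sum>k<n. survival k y)"
  using assms
proof (induction n arbitrary: y F)
  case 0
  then show ?case by (simp add: sum_nonneg)
next
  case (Suc n)
  show ?case
  proof (cases "y \<in> Tgt G")
    case True
    with Suc.prems(3) have "F \<subseteq> {[y]}" by (simp add: plays_from_target)
    then have "(\<Sum>p\<in>F. path_prob G \<rho> \<tau> p * real (length p - 1)) = 0"
      by (intro sum.neutral) auto
    then show ?thesis using survival_nonneg_le_1 by (simp add: sum_nonneg)
  next
    case False
    with Suc.prems(1) have y: "y \<in> Vert G - Tgt G" by simp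
    define Q where "Q z = {q. y # q \<in> F \<and> is_play G z q}" for z
    have Q: "finite (Q z)" "Q z \<subseteq> {q. is_play G z q}" "\<forall>q \<in> Q z. length q \<le> Suc n" for z
      using Suc.prems(2,4) by (auto simp: Q_def inj_on_def intro: finite_subset[OF _ finite_vimageI])
    have "(\<Sum>p\<in>F. path_prob G \<rho> \<tau> p * real (length p - 1)) = (\<Sum>z \<in> Ed G `` {y}. step y z *
        ((\<Sum>q \<in> Q z. path_prob G \<rho> \<tau> q) + (\<Sum>q \<in> Q z. path_prob G \<rho> \<tau> q * real (length q - 1))))"
      unfolding Q_def by (rule sum_plays_steps_first_step[OF False Suc.prems(2,3)])
    also have "\<dots> \<le> (\<Sum>z \<in> Ed G `` {y}. step y z * (1 + (\<Sum>k<n. survival k z)))"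
    proof (intro sum_mono mult_left_mono add_mono)
      fix z assume "z \<in> Ed G `` {y}"
      then have "z \<in> Vert G" using edge_in_Vert by blast
      then show "(\<Sum>q \<in> Q z. path_prob G \<rho> \<tau> q) \<le> 1"
        "(\<Sum>q \<in> Q z. path_prob G \<rho> \<tau> q * real (length q - 1)) \<le> (\<Sum>k<n. survival k z)"
        using sum_plays_prob_le_1 Suc.IH Q by auto
    qed simp
    also have "\<dots> = (\<Sum>z \<in> Vert G. step y z * (1 + (\<Sum>k<n. survival k z)))"
      by (rule sum_succs_eq_sum_Vert[OF y])
    also have "\<dots> = (\<Sum>k<Suc n. survival k y)"
      using survival_sum_Suc[OF y] step_sum_eq_1[OF y] by (simp add: distrib_left sum.distrib)
    finally show ?thesis .
  qed
qed

lemma expected_steps_summable: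
  assumes "y \<in> Vert G"
  shows "(\<lambda>p. path_prob G \<rho> \<tau> p * real (length p - 1)) summable_on {p. is_play G y p}"
proof (rule nonneg_bdd_above_summable_on)
  obtain B where B: "\<And>n. (\<Sum>k<n. survival k y) \<le> B" using survival_sum_bounded by metis
  show "bdd_above (sum (\<lambda>p. path_prob G \<rho> \<tau> p * real (length p - 1)) ` {F. F \<subseteq> {p. is_play G y p} \<and> finite F})"
  proof (rule bdd_aboveI2)
    fix F assume F: "F \<in> {F. F \<subseteq> {p. is_play G y p} \<and> finite F}"
    then have "\<forall>p\<in>F. length p \<le> Suc (Max (length ` F))" by (auto intro: le_SucI)
    with F assms have "(\<Sum>p\<in>F. path_prob G \<rho> \<tau> p * real (length p - 1)) \<le> (\<Sum>k<Max (length ` F). survival k y)"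
      by (intro sum_plays_steps_le_survival_sum) auto
    then show "(\<Sum>p\<in>F. path_prob G \<rho> \<tau> p * real (length p - 1)) \<le> B" using B by (rule order_trans)
  qed
qed (simp add: path_prob_nonneg)

lemma payoff_summable:
  assumes "y \<in> Vert G"
  shows "(\<lambda>p. path_prob G \<rho> \<tau> p * real_of_int (path_weight G p)) summable_on {p. is_play G y p}"
proof -
  obtain W where W: "\<And>p. is_path (Ed G) p \<Longrightarrow> \<bar>path_weight G p\<bar> \<le> W * real (length p - 1)"
    using path_weight_bounded by blast
  have "(\<lambda>p. W * (path_prob G \<rho> \<tau> p * real (length p - 1))) summable_on {p. is_play G y p}"
    by (rule summable_on_cmult_right[OF expected_steps_summable[OF assms]])
  then have "(\<lambda>p. norm (path_prob G \<rho> \<tau> p * real_of_int (path_weight G p))) summable_on {p. is_play G y p}"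
  proof (rule summable_on_comparison_test)
    fix p assume "p \<in> {p. is_play G y p}"
    then have "is_path (Ed G) p" by (simp add: is_play_def)
    then have "\<bar>path_weight G p\<bar> \<le> W * real (length p - 1)" by (rule W)
    then have "path_prob G \<rho> \<tau> p * \<bar>path_weight G p\<bar> \<le> path_prob G \<rho> \<tau> p * (W * real (length p - 1))"
      by (rule mult_left_mono[OF _ path_prob_nonneg])
    then show "norm (path_prob G \<rho> \<tau> p * real_of_int (path_weight G p))
        \<le> W * (path_prob G \<rho> \<tau> p * real (length p - 1))"
      by (simp add: abs_mult path_prob_nonneg mult.left_commute)
  qed simp
  then show ?thesis by (rule abs_summable_summable)
qed

lemma expected_payoff_bellman:
  assumes y: "y \<in> Vert G - Tgt G"
  shows "expected_payoff G \<rho> \<tau> y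
    = (\<Sum>z \<in> Vert G. step y z * (real_of_int (wt G y z) + expected_payoff G \<rho> \<tau> z))"
proof -
  define f where "f p = path_prob G \<rho> \<tau> p * real_of_int (path_weight G p)" for p
  have "((\<lambda>q. f (y # q)) has_sum step y z * (real_of_int (wt G y z) + expected_payoff G \<rho> \<tau> z))
      {q. is_play G z q}" if "(y, z) \<in> Ed G" for z
  proof -
    have z: "z \<in> Vert G" using edge_in_Vert that by blast
    have "((\<lambda>q. step y z * (real_of_int (wt G y z) * path_prob G \<rho> \<tau> q + f q)) has_sum
        step y z * (real_of_int (wt G y z) * 1 + expected_payoff G \<rho> \<tau> z)) {q. is_play G z q}"
      unfolding f_def expected_payoff_def
      by (intro has_sum_cmult_right has_sum_add plays_prob_has_sum_1[OF z]
          has_sum_infsum payoff_summable[OF z])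
    moreover have "f (y # q) = step y z * (real_of_int (wt G y z) * path_prob G \<rho> \<tau> q + f q)"
      if "q \<in> {q. is_play G z q}" for q
    proof -
      from that have "q \<noteq> []" "hd q = z" by (simp_all add: is_play_def is_path_def)
      then show ?thesis by (simp add: f_def path_prob_Cons path_weight_Cons algebra_simps)
    qed
    ultimately show ?thesis by (subst has_sum_cong) simp_all
  qed
  then have "(f has_sum (\<Sum>z \<in> Ed G `` {y}. step y z * (real_of_int (wt G y z) + expected_payoff G \<rho> \<tau> z)))
      {p. is_play G y p}"
    using y by (intro has_sum_plays_first_step finite_succs) auto
  then have "expected_payoff G \<rho> \<tau> y
      = (\<Sum>z \<in> Ed G `` {y}. step y z * (real_of_int (wt G y z) + expected_payoff G \<rho> \<tau> z))"
    unfolding expected_payoff_def f_def by (rule infsumI)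
  with sum_succs_eq_sum_Vert[OF y] show ?thesis by simp
qed

lemma exp_TP_eq_expected_payoff: "v \<in> Vert G \<Longrightarrow> exp_TP G \<rho> \<tau> v = ereal (expected_payoff G \<rho> \<tau> v)"
  by (simp add: exp_TP_def expected_payoff_def almost_sure_reach)

lemma expected_payoff_le_excessive:
  assumes target: "\<And>u. u \<in> Tgt G \<Longrightarrow> 0 \<le> g u"
    and excessive: "\<And>u. u \<in> Vert G - Tgt G \<Longrightarrow> (\<Sum>z \<in> Vert G. step u z * (real_of_int (wt G u z) + g z)) \<le> g u"
    and v: "v \<in> Vert G"
  shows "expected_payoff G \<rho> \<tau> v \<le> g v"
proof -
  have "expected_payoff G \<rho> \<tau> v - g v \<le> 0"
  proof (rule max_principle[OF _ _ v])
    fix u assume u: "u \<in> Vert G - Tgt G"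
    have "expected_payoff G \<rho> \<tau> u - g u \<le> (\<Sum>z \<in> Vert G. step u z * (real_of_int (wt G u z) + expected_payoff G \<rho> \<tau> z))
        - (\<Sum>z \<in> Vert G. step u z * (real_of_int (wt G u z) + g z))"
      using expected_payoff_bellman[OF u] excessive[OF u] by simp
    also have "\<dots> = (\<Sum>z \<in> Vert G. step u z * (expected_payoff G \<rho> \<tau> z - g z))"
      by (simp flip: sum_subtractf right_diff_distrib)
    finally show "expected_payoff G \<rho> \<tau> u - g u \<le> (\<Sum>z \<in> Vert G. step u z * (expected_payoff G \<rho> \<tau> z - g z))" .
  qed (simp add: expected_payoff_target target)
  then show ?thesis by simp
qed

lemma expected_payoff_ge_subexcessive:
  assumes target: "\<And>u. u \<in> Tgt G \<Longrightarrow> g u \<le> 0"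
    and subexcessive: "\<And>u. u \<in> Vert G - Tgt G \<Longrightarrow> g u \<le> (\<Sum>z \<in> Vert G. step u z * (real_of_int (wt G u z) + g z))"
    and v: "v \<in> Vert G"
  shows "g v \<le> expected_payoff G \<rho> \<tau> v"
proof -
  have "g v - expected_payoff G \<rho> \<tau> v \<le> 0"
  proof (rule max_principle[OF _ _ v])
    fix u assume u: "u \<in> Vert G - Tgt G"
    have "g u - expected_payoff G \<rho> \<tau> u \<le> (\<Sum>z \<in> Vert G. step u z * (real_of_int (wt G u z) + g z))
        - (\<Sum>z \<in> Vert G. step u z * (real_of_int (wt G u z) + expected_payoff G \<rho> \<tau> z))"
      using expected_payoff_bellman[OF u] subexcessive[OF u] by simp
    also have "\<dots> = (\<Sum>z \<in> Vert G. step u z * (g z - expected_payoff G \<rho> \<tau> z))"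
      by (simp flip: sum_subtractf right_diff_distrib)
    finally show "g u - expected_payoff G \<rho> \<tau> u \<le> (\<Sum>z \<in> Vert G. step u z * (g z - expected_payoff G \<rho> \<tau> z))" .
  qed (simp add: expected_payoff_target target)
  then show ?thesis by simp
qed

end

section \<open>Optimal memoryless replies of Max\<close>

locale absorbing_min_strategy =
  fixes G :: "('v, 'a) game_scheme" and \<rho> :: "'v \<Rightarrow> 'v pmf"
  assumes sp_game: "sp_game G" and min_strategy: "ml_strat G (VMin G) \<rho>"
    and reach: "\<And>\<tau> v. ml_strat G (VMax G) \<tau> \<Longrightarrow> v \<in> Vert G \<Longrightarrow> reach_prob G \<rho> \<tau> v = 1"
begin

lemma absorbing_chainI: "ml_strat G (VMax G) \<tau> \<Longrightarrow> absorbing_chain G \<rho> \<tau>"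
  using sp_game min_strategy reach by unfold_locales auto

lemma finite_Vert: "finite (Vert G)"
  using sp_game by (simp add: sp_game_def)

lemma edge_in_Vert: "(x, y) \<in> Ed G \<Longrightarrow> x \<in> Vert G - Tgt G \<and> y \<in> Vert G"
  using sp_game by (auto simp: sp_game_def)

lemma VMax_nontarget: "VMax G \<subseteq> Vert G - Tgt G"
  using sp_game by (auto simp: sp_game_def Vert_def)

lemma VMax_not_VMin: "x \<in> VMax G \<Longrightarrow> x \<notin> VMin G"
  using sp_game by (auto simp: sp_game_def)

lemma switch_improves_expected_payoff:
  assumes \<tau>: "ml_strat G (VMax G) \<tau>" and x: "x \<in> VMax G" and xy: "(x, y) \<in> Ed G"
    and gain: "expected_payoff G \<rho> \<tau> x < real_of_int (wt G x y) + expected_payoff G \<rho> \<tau> y"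
  shows "\<forall>v \<in> Vert G. expected_payoff G \<rho> \<tau> v \<le> expected_payoff G \<rho> (\<tau>(x := return_pmf y)) v"
    and "expected_payoff G \<rho> \<tau> x < expected_payoff G \<rho> (\<tau>(x := return_pmf y)) x"
proof -
  let ?\<tau>' = "\<tau>(x := return_pmf y)"
  let ?g = "expected_payoff G \<rho> \<tau>" and ?g' = "expected_payoff G \<rho> ?\<tau>'"
  interpret C: absorbing_chain G \<rho> \<tau> using absorbing_chainI[OF \<tau>] .
  have "ml_strat G (VMax G) ?\<tau>'" using \<tau> xy by (simp add: ml_strat_def)
  then interpret C': absorbing_chain G \<rho> ?\<tau>' by (rule absorbing_chainI)
  have y: "y \<in> Vert G" using edge_in_Vert[OF xy] by blast
  have trans_x: "trans_pmf G \<rho> ?\<tau>' x = return_pmf y"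
    using x VMax_not_VMin by (simp add: trans_pmf_def)
  have step_x: "(\<Sum>z \<in> Vert G. pmf (trans_pmf G \<rho> ?\<tau>' x) z * F z) = F y" for F
    using y finite_Vert by (simp add: trans_x indicator_def)
  have sub: "?g u \<le> (\<Sum>z \<in> Vert G. pmf (trans_pmf G \<rho> ?\<tau>' u) z * (real_of_int (wt G u z) + ?g z))"
    if u: "u \<in> Vert G - Tgt G" for u
  proof (cases "u = x")
    case True
    with gain show ?thesis by (simp add: step_x)
  next
    case False
    then have "trans_pmf G \<rho> ?\<tau>' u = trans_pmf G \<rho> \<tau> u" by (simp add: trans_pmf_def)
    with C.expected_payoff_bellman[OF u] show ?thesis by simp
  qed
  show ge: "\<forall>v \<in> Vert G. ?g v \<le> ?g' v"
    using C'.expected_payoff_ge_subexcessive[OF _ sub] by (simp add: expected_payoff_target)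
  have "?g' x = real_of_int (wt G x y) + ?g' y"
    using C'.expected_payoff_bellman x VMax_nontarget by (auto simp: step_x)
  with ge y gain show "?g x < ?g' x" by fastforce
qed

definition locally_optimal_reply :: "('v \<Rightarrow> 'v pmf) \<Rightarrow> bool" where
  "locally_optimal_reply \<tau> \<longleftrightarrow> ml_strat G (VMax G) \<tau> \<and>
     (\<forall>x \<in> VMax G. \<forall>y. (x, y) \<in> Ed G \<longrightarrow>
        real_of_int (wt G x y) + expected_payoff G \<rho> \<tau> y \<le> expected_payoff G \<rho> \<tau> x)"

definition pure_replies :: "('v \<Rightarrow> 'v) set" where
  "pure_replies = {d \<in> VMax G \<rightarrow>\<^sub>E Vert G. \<forall>x \<in> VMax G. (x, d x) \<in> Ed G}"

lemma ml_strat_pure_reply: "d \<in> pure_replies \<Longrightarrow> ml_strat G (VMax G) (return_pmf \<circ> d)"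
  by (simp add: pure_replies_def ml_strat_def)

lemma finite_pure_replies: "finite pure_replies"
proof -
  have "finite (VMax G)" using finite_Vert by (simp add: Vert_def)
  with finite_Vert show ?thesis unfolding pure_replies_def by (simp add: finite_PiE)
qed

lemma pure_replies_nonempty: "pure_replies \<noteq> {}"
proof -
  have "\<forall>x \<in> VMax G. \<exists>y. (x, y) \<in> Ed G"
    using sp_game VMax_nontarget by (auto simp: sp_game_def)
  then obtain f where "\<forall>x \<in> VMax G. (x, f x) \<in> Ed G" by metis
  then have "restrict f (VMax G) \<in> pure_replies"
    unfolding pure_replies_def using edge_in_Vert by (auto simp: restrict_PiE_iff)
  then show ?thesis by blast
qed

lemma pure_replies_upd:
  "d \<in> pure_replies \<Longrightarrow> x \<in> VMax G \<Longrightarrow> (x, y) \<in> Ed G \<Longrightarrow> d(x := y) \<in> pure_replies"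
  using edge_in_Vert[of x y] unfolding pure_replies_def by (auto simp: PiE_def extensional_def)

(* Strategy improvement: a pure reply maximizing the total expected payoff admits no improving switch. *)
lemma locally_optimal_reply_exists: "\<exists>\<tau>. locally_optimal_reply \<tau>"
proof -
  define total where "total d = (\<Sum>v \<in> Vert G. expected_payoff G \<rho> (return_pmf \<circ> d) v)" for d
  have "Max (total ` pure_replies) \<in> total ` pure_replies"
    using finite_pure_replies pure_replies_nonempty by (intro Max_in) auto
  then obtain d where d: "d \<in> pure_replies" and d_max: "total d = Max (total ` pure_replies)"
    by (metis imageE)
  have "real_of_int (wt G x y) + expected_payoff G \<rho> (return_pmf \<circ> d) y \<le> expected_payoff G \<rho> (return_pmf \<circ> d) x"
    if x: "x \<in> VMax G" and xy: "(x, y) \<in> Ed G" for x y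
  proof (rule ccontr)
    assume "\<not> ?thesis"
    then have gain: "expected_payoff G \<rho> (return_pmf \<circ> d) x
        < real_of_int (wt G x y) + expected_payoff G \<rho> (return_pmf \<circ> d) y"
      by simp
    have "return_pmf \<circ> d(x := y) = (return_pmf \<circ> d)(x := return_pmf y)" by auto
    then have "total d < total (d(x := y))"
      unfolding total_def
      using switch_improves_expected_payoff[OF ml_strat_pure_reply[OF d] x xy gain] x VMax_nontarget
      by (intro sum_strict_mono_ex1[OF finite_Vert]) auto
    moreover have "total (d(x := y)) \<le> total d"
      unfolding d_max using finite_pure_replies pure_replies_upd[OF d x xy] by (intro Max_ge) auto
    ultimately show False by simp
  qed
  with ml_strat_pure_reply[OF d] show ?thesis unfolding locally_optimal_reply_def by blast
qed

lemma Val_m_rho_eq_expected_payoff: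
  assumes opt: "locally_optimal_reply \<tau>" and v: "v \<in> Vert G"
  shows "Val_m_rho G \<rho> v = ereal (expected_payoff G \<rho> \<tau> v)"
proof -
  have \<tau>: "ml_strat G (VMax G) \<tau>" using opt by (simp add: locally_optimal_reply_def)
  interpret C: absorbing_chain G \<rho> \<tau> using absorbing_chainI[OF \<tau>] .
  let ?g = "expected_payoff G \<rho> \<tau>"
  have "exp_TP G \<rho> \<tau>' v \<le> ereal (?g v)" if \<tau>': "ml_strat G (VMax G) \<tau>'" for \<tau>'
  proof -
    interpret C': absorbing_chain G \<rho> \<tau>' using absorbing_chainI[OF \<tau>'] .
    have "(\<Sum>z \<in> Vert G. pmf (trans_pmf G \<rho> \<tau>' u) z * (real_of_int (wt G u z) + ?g z)) \<le> ?g u"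
      if u: "u \<in> Vert G - Tgt G" for u
    proof (cases "u \<in> VMin G")
      case True
      then have "trans_pmf G \<rho> \<tau>' u = trans_pmf G \<rho> \<tau> u" by (simp add: trans_pmf_def)
      with C.expected_payoff_bellman[OF u] show ?thesis by simp
    next
      case False
      with u have "u \<in> VMax G" by (auto simp: Vert_def)
      with opt C'.step_nonzero_edge[OF u] show ?thesis
        by (intro C'.step_average_le[OF u]) (auto simp: locally_optimal_reply_def)
    qed
    then have "expected_payoff G \<rho> \<tau>' v \<le> ?g v"
      using C'.expected_payoff_le_excessive v by (simp add: expected_payoff_target)
    then show ?thesis using C'.exp_TP_eq_expected_payoff[OF v] by simp
  qed
  moreover have "exp_TP G \<rho> \<tau> v = ereal (?g v)" by (rule C.exp_TP_eq_expected_payoff[OF v])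
  ultimately show ?thesis
    unfolding Val_m_rho_def using \<tau> by (intro antisym SUP_least SUP_upper2[of \<tau>]) auto
qed

lemma tilde_edge_potential_drop:
  assumes opt: "locally_optimal_reply \<tau>" and ab: "(a, b) \<in> Ed (tilde_game G \<rho>)"
  shows "real_of_int (wt (tilde_game G \<rho>) a b) + expected_payoff G \<rho> \<tau> b \<le> expected_payoff G \<rho> \<tau> a"
proof -
  have \<tau>: "ml_strat G (VMax G) \<tau>" using opt by (simp add: locally_optimal_reply_def)
  interpret C: absorbing_chain G \<rho> \<tau> using absorbing_chainI[OF \<tau>] .
  let ?g = "expected_payoff G \<rho> \<tau>"
  from ab have ab_G: "(a, b) \<in> Ed G" and tilde: "a \<in> VMin G \<Longrightarrow> b \<in> E_tilde G \<rho> a"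
    by (auto simp: tilde_game_def)
  have a: "a \<in> Vert G - Tgt G" using edge_in_Vert[OF ab_G] by blast
  have "real_of_int (wt G a b) + ?g b \<le> ?g a"
  proof (cases "a \<in> VMin G")
    case True
    then have trans_a: "trans_pmf G \<rho> \<tau> a = \<rho> a" by (simp add: trans_pmf_def)
    have "real_of_int (wt G a b) + ?g b \<le> real_of_int (wt G a z) + ?g z" if "pmf (\<rho> a) z \<noteq> 0" for z
    proof -
      have "z \<in> Vert G" using C.step_nonzero_edge[OF a] edge_in_Vert that trans_a by force
      moreover have "b \<in> Vert G" using edge_in_Vert[OF ab_G] by blast
      moreover have "ereal (real_of_int (wt G a b)) + Val_m_rho G \<rho> b
          \<le> ereal (real_of_int (wt G a z)) + Val_m_rho G \<rho> z"
        using tilde[OF True] that by (simp add: E_tilde_def set_pmf_iff)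
      ultimately show ?thesis by (simp add: Val_m_rho_eq_expected_payoff[OF opt])
    qed
    then have "real_of_int (wt G a b) + ?g b \<le> (\<Sum>z \<in> Vert G. C.step a z * (real_of_int (wt G a z) + ?g z))"
      by (intro C.step_average_ge[OF a]) (simp add: trans_a)
    with C.expected_payoff_bellman[OF a] show ?thesis by simp
  next
    case False
    with a have "a \<in> VMax G" by (auto simp: Vert_def)
    with opt ab_G show ?thesis by (simp add: locally_optimal_reply_def)
  qed
  then show ?thesis by (simp add: tilde_game_def)
qed

end

theorem lemma19:
  fixes G :: "'v game" and \<rho> :: "'v \<Rightarrow> 'v pmf"
  assumes "sp_game G"
    and "\<forall>v \<in> Vert G. Val_d G v \<noteq> \<infinity>"
    and "\<forall>v \<in> Vert G. Val_m_bar G v \<noteq> \<infinity>"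
    and "ml_strat G (VMin G) \<rho>"
    and "\<forall>v \<in> Vert G. \<forall>\<tau>. ml_strat G (VMax G) \<tau> \<longrightarrow> reach_prob G \<rho> \<tau> v = 1"
  shows "(\<forall>v \<in> Vert G. \<forall>p. is_play (tilde_game G \<rho>) v p
            \<longrightarrow> ereal (real_of_int (path_weight (tilde_game G \<rho>) p)) \<le> Val_m_rho G \<rho> v)
       \<and> (\<forall>p. is_cycle (tilde_game G \<rho>) p \<longrightarrow> path_weight (tilde_game G \<rho>) p \<le> 0)"
proof -
  interpret absorbing_min_strategy G \<rho>
    using assms(1,4,5) by unfold_locales auto
  obtain \<tau> where opt: "locally_optimal_reply \<tau>" using locally_optimal_reply_exists by blast
  let ?g = "expected_payoff G \<rho> \<tau>" and ?H = "tilde_game G \<rho>"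
  have drop: "real_of_int (path_weight ?H p) \<le> ?g (hd p) - ?g (last p)" if "is_path (Ed ?H) p" for p
    using path_weight_le_potential_drop[OF tilde_edge_potential_drop[OF opt] that] .
  have "Tgt ?H = Tgt G" by (simp add: tilde_game_def)
  have "ereal (real_of_int (path_weight ?H p)) \<le> Val_m_rho G \<rho> v"
    if "v \<in> Vert G" "is_play ?H v p" for v p
  proof -
    from that \<open>Tgt ?H = Tgt G\<close> have "is_path (Ed ?H) p" "hd p = v" "last p \<in> Tgt G"
      by (auto simp: is_play_def)
    with drop[of p] expected_payoff_target[of "last p" G \<rho> \<tau>]
    have "real_of_int (path_weight ?H p) \<le> ?g v" by simp
    with Val_m_rho_eq_expected_payoff[OF opt \<open>v \<in> Vert G\<close>] show ?thesis by simp
  qed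
  moreover have "path_weight ?H p \<le> 0" if "is_cycle ?H p" for p
    using that drop[of p] by (simp add: is_cycle_def)
  ultimately show ?thesis by blast
qed

end
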